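(* Let $\varphi$ be a setfunction on a set-algebra $(J,\mathcal{B})$ with $\varphi(\emptyset)=0$. Then the quotient set $Q(\varphi)=\bigcup_{k\in\mathbb{N}}Q_k(\varphi)$ is quotient-closed and has the common lift property.
   Context: A set-algebra $(J,\mathcal{B})$ is a family $\mathcal{B}$ of subsets of $J$ containing $\emptyset$ and closed under complement and finite union. A setfunction on $(J,\mathcal{B})$ is a map $\varphi\colon\mathcal{B}\to\mathbb{R}$; all setfunctions satisfy $\varphi(\emptyset)=0$. A setfunction is finite if it is defined on $(J,2^J)$ with $J$ finite. $\mathbb{N}$ denotes the positive integers and $[k]=\{1,\dots,k\}$. For $k\in\mathbb{N}$ and a measurable map $F\colon J\to[k]$ (i.e. $F^{-1}(i)\in\mathcal{B}$ for every $i$), the quotient $\varphi\circ F^{-1}$ is the setfunction on $(\,[k],2^{[k]})$ given by $A\mapsto\varphi(F^{-1}(A))$. $Q_k(\varphi)\subseteq\mathbb{R}^{2^k}$ is the set of all such quotients of $\varphi$ on $[k]$. A setfunction $\varphi$ is a lift of $\varphi'$ if $\varphi'$ is a quotient of $\varphi$. A family $A$ of finite setfunctions is quotient-closed if every quotient of a function in $A$ belongs to $A$; it has the common lift property if every finite subset of $A$ has a common lift belonging to $A$. *)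

theory Defs
  imports Complex_Main
begin

definition set_algebra :: "'a set \<Rightarrow> 'a set set \<Rightarrow> bool" where
  "set_algebra J B \<longleftrightarrow> B \<subseteq> Pow J \<and> {} \<in> B \<and> (\<forall>A\<in>B. J - A \<in> B)
     \<and> (\<forall>A\<in>B. \<forall>C\<in>B. A \<union> C \<in> B)"

definition meas_map :: "'a set \<Rightarrow> 'a set set \<Rightarrow> nat \<Rightarrow> ('a \<Rightarrow> nat) \<Rightarrow> bool" where
  "meas_map J B k F \<longleftrightarrow> (\<forall>j\<in>J. F j \<in> {1..k}) \<and> (\<forall>i\<in>{1..k}. {j\<in>J. F j = i} \<in> B)"

text \<open>The quotient setfunction phi o F^{-1} on ([k], 2^[k]); set to 0 outside 2^[k]
  (values off the domain are irrelevant and normalised to 0).\<close>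
definition quot :: "'a set \<Rightarrow> ('a set \<Rightarrow> real) \<Rightarrow> nat \<Rightarrow> ('a \<Rightarrow> nat) \<Rightarrow> nat set \<Rightarrow> real" where
  "quot J \<phi> k F = (\<lambda>A. if A \<subseteq> {1..k} then \<phi> {j\<in>J. F j \<in> A} else 0)"

definition Qk :: "'a set \<Rightarrow> 'a set set \<Rightarrow> ('a set \<Rightarrow> real) \<Rightarrow> nat \<Rightarrow> (nat set \<Rightarrow> real) set" where
  "Qk J B \<phi> k = {quot J \<phi> k F | F. meas_map J B k F}"

text \<open>Finite setfunctions are represented as pairs (ground set, function) with the
  ground set a finite set of naturals.\<close>
definition Q :: "'a set \<Rightarrow> 'a set set \<Rightarrow> ('a set \<Rightarrow> real) \<Rightarrow> (nat set \<times> (nat set \<Rightarrow> real)) set" where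
  "Q J B \<phi> = {({1..k}, \<psi>) | k \<psi>. k \<ge> 1 \<and> \<psi> \<in> Qk J B \<phi> k}"

definition is_quotient :: "nat set \<Rightarrow> (nat set \<Rightarrow> real) \<Rightarrow> nat set \<Rightarrow> (nat set \<Rightarrow> real) \<Rightarrow> bool" where
  "is_quotient J \<psi> J' \<psi>' \<longleftrightarrow>
     (\<exists>m\<ge>1. J' = {1..m} \<and> (\<exists>G. meas_map J (Pow J) m G \<and> \<psi>' = quot J \<psi> m G))"

definition quotient_closed :: "(nat set \<times> (nat set \<Rightarrow> real)) set \<Rightarrow> bool" where
  "quotient_closed A \<longleftrightarrow>
     (\<forall>(J, \<psi>)\<in>A. \<forall>J' \<psi>'. is_quotient J \<psi> J' \<psi>' \<longrightarrow> (J', \<psi>') \<in> A)"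

definition common_lift_property :: "(nat set \<times> (nat set \<Rightarrow> real)) set \<Rightarrow> bool" where
  "common_lift_property A \<longleftrightarrow>
     (\<forall>S\<subseteq>A. finite S \<longrightarrow> (\<exists>(J, \<psi>)\<in>A. \<forall>(J', \<psi>')\<in>S. is_quotient J \<psi> J' \<psi>'))"

end

theory Submission
  imports Defs "HOL-Library.FuncSet"
begin

text \<open>A quotient of a quotient is the quotient along the composite map, which gives quotient
  closedness. For a common lift of finitely many quotients along maps \<open>H\<^sub>s : J \<rightarrow> [m\<^sub>s]\<close>, take
  the quotient along the joint map \<open>j \<mapsto> (H\<^sub>s j)\<^sub>s\<close>, whose values form a finite product set that
  is relabelled as \<open>[n]\<close>: its fibres are finite intersections of fibres of the \<open>H\<^sub>s\<close>, and each
  \<open>H\<^sub>s\<close> factors through it by a coordinate projection.\<close>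

lemma set_algebra_UN_finite:
  assumes "set_algebra J B" "finite I" "\<And>i. i \<in> I \<Longrightarrow> A i \<in> B"
  shows "(\<Union>i\<in>I. A i) \<in> B"
  using assms(2,3) by induction (use assms(1) in \<open>auto simp: set_algebra_def\<close>)

lemma set_algebra_Int:
  assumes "set_algebra J B" "A \<in> B" "C \<in> B"
  shows "A \<inter> C \<in> B"
proof -
  have "A \<inter> C = J - ((J - A) \<union> (J - C))"
    using assms unfolding set_algebra_def by blast
  also have "\<dots> \<in> B"
    using assms unfolding set_algebra_def by blast
  finally show ?thesis .
qed

lemma set_algebra_INT_finite:
  assumes "set_algebra J B" "finite I" "\<And>i. i \<in> I \<Longrightarrow> A i \<in> B"
  shows "J \<inter> (\<Inter>i\<in>I. A i) \<in> B"
  using assms(2,3)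
proof induction
  case empty
  have "J - {} \<in> B" using assms(1) unfolding set_algebra_def by blast
  then show ?case by simp
next
  case (insert i I)
  then have "A i \<inter> (J \<inter> (\<Inter>i\<in>I. A i)) \<in> B"
    using set_algebra_Int[OF assms(1)] by blast
  then show ?case by (simp add: Int_left_commute)
qed

lemma meas_map_Pow_iff: "meas_map K (Pow K) m G \<longleftrightarrow> (\<forall>i\<in>K. G i \<in> {1..m})"
  unfolding meas_map_def by auto

lemma meas_map_comp:
  assumes "set_algebra J B" "meas_map J B k F" "\<forall>i\<in>{1..k}. G i \<in> {1..m}"
  shows "meas_map J B m (G \<circ> F)"
  unfolding meas_map_def
proof (intro conjI ballI)
  fix j assume "j \<in> J"
  then show "(G \<circ> F) j \<in> {1..m}" using assms(2,3) unfolding meas_map_def by auto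
next
  fix i
  have "{j\<in>J. (G \<circ> F) j = i} = (\<Union>l\<in>{l\<in>{1..k}. G l = i}. {j\<in>J. F j = l})"
    using assms(2) unfolding meas_map_def by auto
  also have "\<dots> \<in> B"
    using assms(2) by (intro set_algebra_UN_finite[OF assms(1)]) (auto simp: meas_map_def)
  finally show "{j\<in>J. (G \<circ> F) j = i} \<in> B" .
qed

lemma quot_quot:
  assumes "meas_map J B k F"
  shows "quot {1..k} (quot J \<phi> k F) m G = quot J \<phi> m (G \<circ> F)"
proof
  fix A
  have "{j\<in>J. F j \<in> {i\<in>{1..k}. G i \<in> A}} = {j\<in>J. G (F j) \<in> A}"
    using assms unfolding meas_map_def by blast
  then show "quot {1..k} (quot J \<phi> k F) m G A = quot J \<phi> m (G \<circ> F) A"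
    unfolding quot_def by auto
qed

lemma quot_cong:
  assumes "\<And>j. j \<in> J \<Longrightarrow> F j = F' j"
  shows "quot J \<phi> m F = quot J \<phi> m F'"
proof
  fix A
  have "{j\<in>J. F j \<in> A} = {j\<in>J. F' j \<in> A}" using assms by auto
  then show "quot J \<phi> m F A = quot J \<phi> m F' A" unfolding quot_def by simp
qed

lemma is_quotient_quot_comp:
  assumes "meas_map J B k F" "m \<ge> 1" "\<forall>i\<in>{1..k}. G i \<in> {1..m}"
  shows "is_quotient {1..k} (quot J \<phi> k F) {1..m} (quot J \<phi> m (G \<circ> F))"
  unfolding is_quotient_def using assms quot_quot[OF assms(1)] meas_map_Pow_iff by metis

lemma meas_map_relabel:
  assumes "finite X" "\<forall>j\<in>J. P j \<in> X" "\<forall>x\<in>X. {j\<in>J. P j = x} \<in> B"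
  obtains e where "bij_betw e X {1..card X}" "meas_map J B (card X) (e \<circ> P)"
proof -
  obtain e where e: "bij_betw e X {1..card X}"
    using bij_betw_iff_card[OF assms(1)] by fastforce
  have "{j\<in>J. (e \<circ> P) j = i} \<in> B" if "i \<in> {1..card X}" for i
  proof -
    have "{j\<in>J. (e \<circ> P) j = i} = {j\<in>J. P j = inv_into X e i}"
      using e that assms(2) bij_betw_inv_into_left bij_betw_inv_into_right by fastforce
    then show ?thesis
      using assms(3) e that bij_betw_apply bij_betw_inv_into by metis
  qed
  moreover have "\<forall>j\<in>J. (e \<circ> P) j \<in> {1..card X}"
    using e assms(2) bij_betw_apply by fastforce
  ultimately show thesis
    using e that unfolding meas_map_def by blast
qed

lemma meas_map_common_refinement:
  assumes sa: "set_algebra J B" and "finite S"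
    and H: "\<And>s. s \<in> S \<Longrightarrow> m s \<ge> 1 \<and> meas_map J B (m s) (H s)"
  obtains n F G where "n \<ge> 1" "meas_map J B n F"
    "\<And>s. s \<in> S \<Longrightarrow> (\<forall>i\<in>{1..n}. G s i \<in> {1..m s}) \<and> (\<forall>j\<in>J. G s (F j) = H s j)"
proof -
  define X where "X = (\<Pi>\<^sub>E s\<in>S. {1..m s})"
  define P where "P j = (\<lambda>s\<in>S. H s j)" for j
  have "finite X" unfolding X_def using \<open>finite S\<close> by (simp add: finite_PiE)
  have "X \<noteq> {}" unfolding X_def using H by (simp add: PiE_eq_empty_iff)
  have P_X: "\<forall>j\<in>J. P j \<in> X"
    using H unfolding X_def P_def meas_map_def by auto
  have "{j\<in>J. P j = x} \<in> B" if "x \<in> X" for x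
  proof -
    have "{j\<in>J. P j = x} = J \<inter> (\<Inter>s\<in>S. {j\<in>J. H s j = x s})"
      using that unfolding X_def P_def by (auto simp: PiE_def extensional_def)
    also have "\<dots> \<in> B"
      using H that unfolding X_def
      by (intro set_algebra_INT_finite[OF sa \<open>finite S\<close>]) (auto simp: meas_map_def PiE_iff)
    finally show ?thesis .
  qed
  then obtain e where e: "bij_betw e X {1..card X}" and F: "meas_map J B (card X) (e \<circ> P)"
    using meas_map_relabel[OF \<open>finite X\<close> P_X] by blast
  show thesis
  proof
    show "card X \<ge> 1"
      using \<open>finite X\<close> \<open>X \<noteq> {}\<close> by (simp add: Suc_le_eq card_gt_0_iff)
    show "meas_map J B (card X) (e \<circ> P)" by (fact F)
    fix s assume "s \<in> S"
    show "(\<forall>i\<in>{1..card X}. inv_into X e i s \<in> {1..m s}) \<and>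
      (\<forall>j\<in>J. inv_into X e ((e \<circ> P) j) s = H s j)"
      using \<open>s \<in> S\<close> e P_X bij_betw_inv_into_left bij_betw_apply[OF bij_betw_inv_into[OF e]]
      unfolding X_def P_def by fastforce
  qed
qed

lemma quotient_closed_Q:
  assumes "set_algebra J B"
  shows "quotient_closed (Q J B \<phi>)"
  unfolding quotient_closed_def
proof clarify
  fix K \<psi> K' \<psi>'
  assume "(K, \<psi>) \<in> Q J B \<phi>" and "is_quotient K \<psi> K' \<psi>'"
  then obtain k F m G where F: "meas_map J B k F" and "K = {1..k}" "\<psi> = quot J \<phi> k F"
    and "m \<ge> 1" "K' = {1..m}" "meas_map K (Pow K) m G" "\<psi>' = quot K \<psi> m G"
    unfolding Q_def Qk_def is_quotient_def by auto
  moreover have "meas_map J B m (G \<circ> F)"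
    using calculation by (intro meas_map_comp[OF assms F]) (simp add: meas_map_Pow_iff)
  moreover have "\<psi>' = quot J \<phi> m (G \<circ> F)"
    using calculation quot_quot[OF F] by metis
  ultimately show "(K', \<psi>') \<in> Q J B \<phi>"
    unfolding Q_def Qk_def by blast
qed

lemma common_lift_property_Q:
  assumes "set_algebra J B"
  shows "common_lift_property (Q J B \<phi>)"
  unfolding common_lift_property_def
proof (intro allI impI)
  fix S assume "S \<subseteq> Q J B \<phi>" "finite S"
  then have "\<forall>s\<in>S. \<exists>m H. m \<ge> 1 \<and> meas_map J B m H \<and> s = ({1..m}, quot J \<phi> m H)"
    unfolding Q_def Qk_def by blast
  then obtain m H where H: "\<And>s. s \<in> S \<Longrightarrow>
      m s \<ge> 1 \<and> meas_map J B (m s) (H s) \<and> s = ({1..m s}, quot J \<phi> (m s) (H s))"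
    by metis
  obtain n F G where "n \<ge> 1" and F: "meas_map J B n F" and G: "\<And>s. s \<in> S \<Longrightarrow>
      (\<forall>i\<in>{1..n}. G s i \<in> {1..m s}) \<and> (\<forall>j\<in>J. G s (F j) = H s j)"
    using meas_map_common_refinement[OF assms \<open>finite S\<close>, of m H] H by blast
  have "is_quotient {1..n} (quot J \<phi> n F) (fst s) (snd s)" if "s \<in> S" for s
  proof -
    have "s = ({1..m s}, quot J \<phi> (m s) (G s \<circ> F))"
      using G[OF that] H[OF that] quot_cong[of J "H s" "G s \<circ> F"] by simp
    then show ?thesis
      using is_quotient_quot_comp[OF F, of "m s" "G s"] G[OF that] H[OF that] by (metis fst_conv snd_conv)
  qed
  moreover have "({1..n}, quot J \<phi> n F) \<in> Q J B \<phi>"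
    unfolding Q_def Qk_def using \<open>n \<ge> 1\<close> F by blast
  ultimately show "\<exists>(K, \<psi>)\<in>Q J B \<phi>. \<forall>(K', \<psi>')\<in>S. is_quotient K \<psi> K' \<psi>'"
    by fastforce
qed

theorem lemma2p4:
  fixes J :: "'a set" and B :: "'a set set" and \<phi> :: "'a set \<Rightarrow> real"
  assumes "set_algebra J B"
    and "\<phi> {} = 0"
  shows "quotient_closed (Q J B \<phi>) \<and> common_lift_property (Q J B \<phi>)"
  using quotient_closed_Q[OF assms(1)] common_lift_property_Q[OF assms(1)] by blast

end
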